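(* Let $m\in\mathcal{P}(\mathcal{S})$ be such that $Q^d(m)$ is irreducible for every deterministic stationary strategy $d\in D^s$. Then $\det(\tilde{Q}^\pi(m))\neq 0$ for all $\pi\in\Pi^s$, and $\det(\tilde{Q}^\pi(m))$ has the same sign for all $\pi\in\Pi^s$.
   Context: $\mathcal{S}=\{1,\dots,S\}$ ($S>1$), $\mathcal{A}=\{1,\dots,A\}$; for each $a$ and $m\in\mathcal{P}(\mathcal{S})$, $(Q_{ija}(m))_{i,j}$ is a conservative generator (off-diagonal $\ge0$, zero row sums). $\Pi^s$: stationary strategies, i.e. matrices $(\pi_{ia})$ with rows in $\mathcal{P}(\mathcal{A})$; $D^s\subseteq\Pi^s$: deterministic ones ($\pi_{ia}\in\{0,1\}$), identified with maps $d:\mathcal{S}\to\mathcal{A}$. $Q^\pi(m)_{ij}=\sum_aQ_{ija}(m)\pi_{ia}$. $\tilde{Q}^\pi(m)$ is $(Q^\pi(m))^T$ with its last row replaced by $(1,\dots,1)$. Irreducible: the directed graph with an edge $i\to j$ ($i\ne j$) whenever the $(i,j)$ entry is positive is strongly connected. *)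

theory Defs
  imports "Jordan_Normal_Form.Determinant"
begin

text \<open>States are 0..S-1, actions 0..A-1 (0-based shift of 1..S, 1..A).
  A generator family is Q i j a m (entry (i,j) of Q_a(m)); measures on the
  state space are vectors m :: nat => real restricted to indices below S.\<close>

definition prob_vec :: "nat \<Rightarrow> (nat \<Rightarrow> real) \<Rightarrow> bool" where
  "prob_vec n p \<longleftrightarrow> (\<forall>i<n. 0 \<le> p i) \<and> (\<Sum>i<n. p i) = 1"

definition conservative_generator :: "nat \<Rightarrow> (nat \<Rightarrow> nat \<Rightarrow> real) \<Rightarrow> bool" where
  "conservative_generator n M \<longleftrightarrow>
     (\<forall>i<n. \<forall>j<n. i \<noteq> j \<longrightarrow> 0 \<le> M i j) \<and> (\<forall>i<n. (\<Sum>j<n. M i j) = 0)"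

definition stationary_strategy :: "nat \<Rightarrow> nat \<Rightarrow> (nat \<Rightarrow> nat \<Rightarrow> real) \<Rightarrow> bool" where
  "stationary_strategy S A \<pi> \<longleftrightarrow> (\<forall>i<S. prob_vec A (\<pi> i))"

definition deterministic_strategy :: "nat \<Rightarrow> nat \<Rightarrow> (nat \<Rightarrow> nat \<Rightarrow> real) \<Rightarrow> bool" where
  "deterministic_strategy S A \<pi> \<longleftrightarrow>
     stationary_strategy S A \<pi> \<and> (\<forall>i<S. \<forall>a<A. \<pi> i a \<in> {0, 1})"

definition Qpol :: "nat \<Rightarrow> (nat \<Rightarrow> nat \<Rightarrow> nat \<Rightarrow> (nat \<Rightarrow> real) \<Rightarrow> real)
    \<Rightarrow> (nat \<Rightarrow> real) \<Rightarrow> (nat \<Rightarrow> nat \<Rightarrow> real) \<Rightarrow> nat \<Rightarrow> nat \<Rightarrow> real" where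
  "Qpol A Q m \<pi> i j = (\<Sum>a<A. Q i j a m * \<pi> i a)"

definition Qtilde :: "nat \<Rightarrow> nat \<Rightarrow> (nat \<Rightarrow> nat \<Rightarrow> nat \<Rightarrow> (nat \<Rightarrow> real) \<Rightarrow> real)
    \<Rightarrow> (nat \<Rightarrow> real) \<Rightarrow> (nat \<Rightarrow> nat \<Rightarrow> real) \<Rightarrow> real mat" where
  "Qtilde S A Q m \<pi> = mat S S (\<lambda>(i, j). if i = S - 1 then 1 else Qpol A Q m \<pi> j i)"

definition irreducible_mat :: "nat \<Rightarrow> (nat \<Rightarrow> nat \<Rightarrow> real) \<Rightarrow> bool" where
  "irreducible_mat n M \<longleftrightarrow>
     (\<forall>i<n. \<forall>j<n. (i, j) \<in> {(k, l). k < n \<and> l < n \<and> k \<noteq> l \<and> 0 < M k l}\<^sup>*)"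

end

theory Submission imports Defs begin

text \<open>Write G for a conservative generator, irreducible in the graph sense. If the bordered
  transpose of G had a nonzero kernel vector v, then with z := v on the first n-1
  coordinates and 0 on the last one, G z would equal the constant vector -v(n-1). A maximum
  principle (at a maximum of z every row of G z is \<open>\<le> 0\<close>, at a minimum \<open>\<ge> 0\<close>) forces that
  constant to vanish, and then propagates equality along the edges of the graph of G, so
  irreducibility makes z constant, hence 0, hence v = 0. For a stationary strategy \<pi>, the
  matrix Q^\<pi>(m) is a conservative generator whose graph contains that of a deterministic
  strategy supported by \<pi>, so the determinant never vanishes on the convex set of stationary
  strategies; by the intermediate value theorem along segments its sign is constant.\<close>

lemma generator_apply_eq_sum_differences:
  assumes "conservative_generator n G" and "k < n"
  shows "(\<Sum>l<n. G k l * z l) = (\<Sum>l<n. G k l * (z l - z k))"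
proof -
  have "(\<Sum>l<n. G k l * (z l - z k)) = (\<Sum>l<n. G k l * z l) - (\<Sum>l<n. G k l) * z k"
    by (simp add: right_diff_distrib sum_subtractf sum_distrib_right)
  with assms show ?thesis
    by (simp add: conservative_generator_def)
qed

lemma generator_term_nonpos_at_max:
  assumes "conservative_generator n G" and "k < n" and "l < n" and "\<forall>l<n. z l \<le> z k"
  shows "G k l * (z l - z k) \<le> 0"
proof (cases "l = k")
  case False
  with assms(1-3) have "0 \<le> G k l"
    by (simp add: conservative_generator_def)
  moreover have "z l - z k \<le> 0"
    using assms(3,4) by simp
  ultimately show ?thesis
    by (simp add: mult_nonneg_nonpos)
qed simp

lemma generator_apply_nonpos_at_max:
  assumes "conservative_generator n G" and "k < n" and "\<forall>l<n. z l \<le> z k"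
  shows "(\<Sum>l<n. G k l * z l) \<le> 0"
proof -
  have "(\<Sum>l<n. G k l * z l) = (\<Sum>l<n. G k l * (z l - z k))"
    using assms(1,2) by (rule generator_apply_eq_sum_differences)
  also have "\<dots> \<le> 0"
    using generator_term_nonpos_at_max[OF assms(1,2) _ assms(3)] by (intro sum_nonpos) simp
  finally show ?thesis .
qed

lemma generator_apply_zero_at_max_imp_eq:
  assumes "conservative_generator n G" and "k < n" and "\<forall>l<n. z l \<le> z k"
    and "(\<Sum>l<n. G k l * z l) = 0" and "l < n" and "0 < G k l"
  shows "z l = z k"
proof -
  have "(\<Sum>l<n. G k l * (z l - z k)) = 0"
    using generator_apply_eq_sum_differences[OF assms(1,2), of z] assms(4) by simp
  moreover have "\<forall>l\<in>{..<n}. G k l * (z l - z k) \<le> 0"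
    using generator_term_nonpos_at_max[OF assms(1,2) _ assms(3)] by simp
  ultimately have "G k l * (z l - z k) = 0"
    using assms(5) sum_nonneg_eq_0_iff[of "{..<n}" "\<lambda>l. - (G k l * (z l - z k))"]
    by (simp add: sum_negf)
  with assms(6) show ?thesis
    by simp
qed

lemma exists_max_index:
  fixes z :: "nat \<Rightarrow> real"
  assumes "n > 0"
  shows "\<exists>k<n. \<forall>l<n. z l \<le> z k"
proof -
  have "Max (z ` {..<n}) \<in> z ` {..<n}"
    using assms by (intro Max_in) auto
  then obtain k where "k < n" "z k = Max (z ` {..<n})"
    by auto
  then show ?thesis
    by auto
qed

lemma generator_apply_const_eq_0:
  assumes "conservative_generator n G" and "n > 0" and "\<forall>j<n. (\<Sum>l<n. G j l * z l) = c"
  shows "c = 0"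
proof -
  obtain k where k: "k < n" "\<forall>l<n. z l \<le> z k"
    using exists_max_index[OF assms(2)] by blast
  obtain k' where k': "k' < n" "\<forall>l<n. - z l \<le> - z k'"
    using exists_max_index[OF assms(2), of "\<lambda>l. - z l"] by blast
  have "c \<le> 0"
    using generator_apply_nonpos_at_max[OF assms(1) k] assms(3) k(1) by simp
  moreover have "- c \<le> 0"
    using generator_apply_nonpos_at_max[OF assms(1) k'] assms(3) k'(1) by (simp add: sum_negf)
  ultimately show ?thesis
    by simp
qed

lemma irreducible_generator_harmonic_imp_const:
  assumes cg: "conservative_generator n G" and irr: "irreducible_mat n G" and "n > 0"
    and harmonic: "\<forall>j<n. (\<Sum>l<n. G j l * z l) = 0"
  obtains c where "\<forall>i<n. z i = c"
proof -
  obtain k where k: "k < n" "\<forall>l<n. z l \<le> z k"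
    using exists_max_index[OF \<open>n > 0\<close>] by blast
  have "z i = z k" if "i < n" for i
  proof -
    from irr k(1) \<open>i < n\<close> have "(k, i) \<in> {(k, l). k < n \<and> l < n \<and> k \<noteq> l \<and> 0 < G k l}\<^sup>*"
      unfolding irreducible_mat_def by blast
    then show "z i = z k"
    proof (induction rule: rtrancl_induct)
      case (step b l)
      then have edge: "b < n" "l < n" "0 < G b l" and "z b = z k"
        by auto
      then have "\<forall>l<n. z l \<le> z b"
        using k(2) by simp
      then have "z l = z b"
        using generator_apply_zero_at_max_imp_eq[OF cg edge(1) _ _ edge(2,3)] harmonic edge(1)
        by blast
      with \<open>z b = z k\<close> show ?case
        by simp
    qed simp
  qed
  then show ?thesis
    using that by blast
qed

lemma det_bordered_transpose_generator_nonzero: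
  assumes n: "n > 0" and cg: "conservative_generator n G" and irr: "irreducible_mat n G"
  shows "det (mat n n (\<lambda>(i, j). if i = n - 1 then 1 else G j i)) \<noteq> 0"
proof
  define M where "M = mat n n (\<lambda>(i, j). if i = n - 1 then 1 else G j i)"
  assume "det (mat n n (\<lambda>(i, j). if i = n - 1 then 1 else G j i)) = 0"
  moreover have "det (transpose_mat M) = det M"
    by (rule det_transpose[of _ n]) (simp add: M_def)
  ultimately have "det (transpose_mat M) = 0"
    by (simp add: M_def)
  then obtain v where v: "v \<in> carrier_vec n" "v \<noteq> 0\<^sub>v n" "transpose_mat M *\<^sub>v v = 0\<^sub>v n"
    using det_0_iff_vec_prod_zero[of "transpose_mat M" n] by (auto simp: M_def)
  define z where "z i = (if i = n - 1 then 0 else v $ i)" for i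
  have Gz: "(\<Sum>l<n. G j l * z l) = - v $ (n - 1)" if j: "j < n" for j
  proof -
    have "0 = (transpose_mat M *\<^sub>v v) $ j"
      using v j by simp
    also have "\<dots> = (\<Sum>i<n. G j i * z i + (if i = n - 1 then v $ i else 0))"
      using v(1) j by (auto simp: M_def z_def scalar_prod_def atLeast0LessThan intro!: sum.cong)
    also have "\<dots> = (\<Sum>l<n. G j l * z l) + v $ (n - 1)"
      using n by (simp add: sum.distrib)
    finally show ?thesis
      by simp
  qed
  have last: "v $ (n - 1) = 0"
    using generator_apply_const_eq_0[OF cg n, of z "- v $ (n - 1)"] Gz by simp
  obtain c where "\<forall>i<n. z i = c"
    using irreducible_generator_harmonic_imp_const[OF cg irr n, of z] Gz last by auto
  moreover have "z (n - 1) = 0"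
    by (simp add: z_def)
  ultimately have z_zero: "z i = 0" if "i < n" for i
    using n that by auto
  have "v $ i = 0" if "i < n" for i
    using z_zero[OF that] last by (cases "i = n - 1") (auto simp: z_def)
  then have "v = 0\<^sub>v n"
    using v(1) by (intro eq_vecI) auto
  with v(2) show False ..
qed

lemma conservative_generator_Qpol:
  assumes gen: "\<And>a \<mu>. a < A \<Longrightarrow> prob_vec S \<mu> \<Longrightarrow> conservative_generator S (\<lambda>i j. Q i j a \<mu>)"
    and m: "prob_vec S m" and \<pi>: "stationary_strategy S A \<pi>"
  shows "conservative_generator S (Qpol A Q m \<pi>)"
  unfolding conservative_generator_def
proof (intro conjI allI impI)
  fix i j assume "i < S" "j < S" "i \<noteq> j"
  with gen m \<pi> show "0 \<le> Qpol A Q m \<pi> i j"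
    unfolding Qpol_def
    by (intro sum_nonneg mult_nonneg_nonneg)
      (auto simp: conservative_generator_def stationary_strategy_def prob_vec_def)
next
  fix i assume "i < S"
  have "(\<Sum>j<S. Qpol A Q m \<pi> i j) = (\<Sum>a<A. (\<Sum>j<S. Q i j a m) * \<pi> i a)"
    unfolding Qpol_def by (simp add: sum.swap[of _ "{..<S}"] sum_distrib_right)
  also have "\<dots> = 0"
    using gen m \<open>i < S\<close> by (intro sum.neutral) (auto simp: conservative_generator_def)
  finally show "(\<Sum>j<S. Qpol A Q m \<pi> i j) = 0" .
qed

definition pure_strategy :: "(nat \<Rightarrow> nat) \<Rightarrow> nat \<Rightarrow> nat \<Rightarrow> real" where
  "pure_strategy c i a = (if a = c i then 1 else 0)"

lemma deterministic_strategy_pure_strategy: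
  assumes "\<forall>i<S. c i < A"
  shows "deterministic_strategy S A (pure_strategy c)"
  using assms
  unfolding deterministic_strategy_def stationary_strategy_def prob_vec_def pure_strategy_def
  by (auto simp: sum.delta)

lemma Qpol_pure_strategy:
  assumes "c k < A"
  shows "Qpol A Q m (pure_strategy c) k l = Q k l (c k) m"
  using assms unfolding Qpol_def pure_strategy_def
  by (simp add: if_distrib sum.delta cong: if_cong)

lemma stationary_strategy_obtain_support:
  assumes "stationary_strategy S A \<pi>"
  obtains c where "\<forall>i<S. c i < A \<and> 0 < \<pi> i (c i)"
proof -
  have "\<exists>a<A. 0 < \<pi> i a" if "i < S" for i
  proof (rule ccontr)
    assume "\<not> (\<exists>a<A. 0 < \<pi> i a)"
    with assms \<open>i < S\<close> have "\<forall>a<A. \<pi> i a = 0"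
      by (force simp: stationary_strategy_def prob_vec_def)
    then have "(\<Sum>a<A. \<pi> i a) = 0"
      by simp
    with assms \<open>i < S\<close> show False
      by (simp add: stationary_strategy_def prob_vec_def)
  qed
  then show ?thesis
    using that by metis
qed

lemma irreducible_mat_mono:
  assumes "irreducible_mat n M" and "\<And>k l. k < n \<Longrightarrow> l < n \<Longrightarrow> k \<noteq> l \<Longrightarrow> 0 < M k l \<Longrightarrow> 0 < M' k l"
  shows "irreducible_mat n M'"
proof -
  have "{(k, l). k < n \<and> l < n \<and> k \<noteq> l \<and> 0 < M k l}
      \<subseteq> {(k, l). k < n \<and> l < n \<and> k \<noteq> l \<and> 0 < M' k l}"
    using assms(2) by auto
  with assms(1) show ?thesis
    unfolding irreducible_mat_def using rtrancl_mono by blast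
qed

lemma irreducible_Qpol:
  assumes gen: "\<And>a \<mu>. a < A \<Longrightarrow> prob_vec S \<mu> \<Longrightarrow> conservative_generator S (\<lambda>i j. Q i j a \<mu>)"
    and m: "prob_vec S m" and \<pi>: "stationary_strategy S A \<pi>"
    and irr: "\<And>d. deterministic_strategy S A d \<Longrightarrow> irreducible_mat S (Qpol A Q m d)"
  shows "irreducible_mat S (Qpol A Q m \<pi>)"
proof -
  obtain c where c: "\<forall>i<S. c i < A \<and> 0 < \<pi> i (c i)"
    using stationary_strategy_obtain_support[OF \<pi>] .
  show ?thesis
  proof (rule irreducible_mat_mono[OF irr[OF deterministic_strategy_pure_strategy]])
    fix k l assume kl: "k < S" "l < S" "k \<noteq> l" and "0 < Qpol A Q m (pure_strategy c) k l"
    with c have "0 < Q k l (c k) m * \<pi> k (c k)"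
      by (simp add: Qpol_pure_strategy)
    also have "\<dots> \<le> Qpol A Q m \<pi> k l"
      unfolding Qpol_def
    proof (rule member_le_sum)
      fix a assume "a \<in> {..<A} - {c k}"
      with gen m \<pi> kl show "0 \<le> Q k l a m * \<pi> k a"
        by (intro mult_nonneg_nonneg)
          (auto simp: conservative_generator_def stationary_strategy_def prob_vec_def)
    qed (use c kl in auto)
    finally show "0 < Qpol A Q m \<pi> k l" .
  qed (use c in auto)
qed

lemma det_Qtilde_nonzero:
  assumes "S > 1"
    and gen: "\<And>a \<mu>. a < A \<Longrightarrow> prob_vec S \<mu> \<Longrightarrow> conservative_generator S (\<lambda>i j. Q i j a \<mu>)"
    and m: "prob_vec S m" and \<pi>: "stationary_strategy S A \<pi>"
    and irr: "\<And>d. deterministic_strategy S A d \<Longrightarrow> irreducible_mat S (Qpol A Q m d)"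
  shows "det (Qtilde S A Q m \<pi>) \<noteq> 0"
proof -
  have "conservative_generator S (Qpol A Q m \<pi>)"
    using gen m \<pi> by (rule conservative_generator_Qpol)
  moreover have "irreducible_mat S (Qpol A Q m \<pi>)"
    using gen m \<pi> irr by (rule irreducible_Qpol)
  ultimately show ?thesis
    unfolding Qtilde_def using det_bordered_transpose_generator_nonzero[of S] \<open>S > 1\<close> by simp
qed

lemma stationary_strategy_convex_comb:
  assumes \<pi>: "stationary_strategy S A \<pi>" and \<pi>': "stationary_strategy S A \<pi>'"
    and "0 \<le> t" "t \<le> 1"
  shows "stationary_strategy S A (\<lambda>i a. (1 - t) * \<pi> i a + t * \<pi>' i a)"
  using assms
  unfolding stationary_strategy_def prob_vec_def
  by (simp add: sum.distrib flip: sum_distrib_left)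

lemma continuous_on_det_mat:
  assumes "\<And>i j. i < n \<Longrightarrow> j < n \<Longrightarrow> continuous_on T (F i j)"
  shows "continuous_on T (\<lambda>t. det (mat n n (\<lambda>(i, j). F i j t :: real)))"
proof -
  have det_eq: "det (mat n n (\<lambda>(i, j). F i j t)) =
      (\<Sum>p\<in>{p. p permutes {0..<n}}. signof p * (\<Prod>i=0..<n. F i (p i) t))" for t
    by (subst det_def'[of _ n]) (auto intro!: sum.cong prod.cong simp: permutes_in_image)
  show ?thesis
    unfolding det_eq
    using assms by (intro continuous_intros) (auto simp: permutes_in_image)
qed

lemma sgn_eq_if_continuous_nonzero:
  fixes f :: "real \<Rightarrow> real"
  assumes "continuous_on {0..1} f" and "\<And>t. 0 \<le> t \<Longrightarrow> t \<le> 1 \<Longrightarrow> f t \<noteq> 0"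
  shows "sgn (f 0) = sgn (f 1)"
proof (rule ccontr)
  assume "sgn (f 0) \<noteq> sgn (f 1)"
  moreover have "f 0 \<noteq> 0" "f 1 \<noteq> 0"
    using assms(2) by auto
  ultimately have "(f 0 < 0 \<and> 0 < f 1) \<or> (f 1 < 0 \<and> 0 < f 0)"
    by (auto simp: sgn_if split: if_splits)
  then obtain x where "0 \<le> x" "x \<le> 1" "f x = 0"
    using IVT'[of f 0 0 1] IVT2'[of f 1 0 0] assms(1) by force
  with assms(2) show False
    by blast
qed

lemma continuous_on_det_Qtilde_segment:
  "continuous_on T (\<lambda>t. det (Qtilde S A Q m (\<lambda>i a. (1 - t) * \<pi> i a + t * \<pi>' i a)))"
  unfolding Qtilde_def Qpol_def
proof (intro continuous_on_det_mat)
  fix i j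
  show "continuous_on T (\<lambda>t. if i = S - 1 then 1
      else \<Sum>a<A. Q j i a m * ((1 - t) * \<pi> j a + t * \<pi>' j a))"
    by (cases "i = S - 1") (auto intro!: continuous_intros)
qed

lemma sgn_det_Qtilde_eq:
  assumes nonzero: "\<And>\<pi>. stationary_strategy S A \<pi> \<Longrightarrow> det (Qtilde S A Q m \<pi>) \<noteq> 0"
    and \<pi>: "stationary_strategy S A \<pi>" and \<pi>': "stationary_strategy S A \<pi>'"
  shows "sgn (det (Qtilde S A Q m \<pi>)) = sgn (det (Qtilde S A Q m \<pi>'))"
  using sgn_eq_if_continuous_nonzero[OF continuous_on_det_Qtilde_segment
      nonzero[OF stationary_strategy_convex_comb[OF \<pi> \<pi>']]]
  by simp

theorem mainTheorem7:
  fixes S A :: nat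
    and Q :: "nat \<Rightarrow> nat \<Rightarrow> nat \<Rightarrow> (nat \<Rightarrow> real) \<Rightarrow> real"
    and m :: "nat \<Rightarrow> real"
  assumes "S > 1" and "A \<ge> 1"
    and gen: "\<And>a \<mu>. a < A \<Longrightarrow> prob_vec S \<mu> \<Longrightarrow>
                conservative_generator S (\<lambda>i j. Q i j a \<mu>)"
    and m: "prob_vec S m"
    and irr: "\<And>d. deterministic_strategy S A d \<Longrightarrow> irreducible_mat S (Qpol A Q m d)"
  shows "(\<forall>\<pi>. stationary_strategy S A \<pi> \<longrightarrow> det (Qtilde S A Q m \<pi>) \<noteq> 0) \<and>
         (\<forall>\<pi> \<pi>'. stationary_strategy S A \<pi> \<longrightarrow> stationary_strategy S A \<pi>' \<longrightarrow>
            sgn (det (Qtilde S A Q m \<pi>)) = sgn (det (Qtilde S A Q m \<pi>')))"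
proof -
  have nonzero: "det (Qtilde S A Q m \<pi>) \<noteq> 0" if "stationary_strategy S A \<pi>" for \<pi>
    using \<open>S > 1\<close> gen m that irr by (rule det_Qtilde_nonzero)
  then show ?thesis
    using sgn_det_Qtilde_eq[of S A Q m] by blast
qed

end
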